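(* Let $(T,\preceq,\Sigma,\mathcal S,\mathcal M)$ be an $(\mathcal S,\mathcal M)$-tree, $n\in\omega$, and $f\in\mathcal{AM}$ with domain $T(\le n)$. Then there exists a unique $f^+\in\mathcal M$ such that $f^+\restriction T(\le n)=f$ and every $\ell\ge\tilde f(n)$ belongs to $\tilde{f^+}[\omega]$.
   Context: A tree is a partially ordered set $(T,\preceq)$ such that for every $a\in T$ the set $\{b\in T:b\prec a\}$ is finite and linearly ordered by $\preceq$. The level of $a$ is $\ell(a)=|\{b\in T:b\prec a\}|$; $T(n)=\{a\in T:\ell(a)=n\}$, and $T(\le n)$, $T(<n)$ are defined analogously. A node $b$ is an immediate successor of $a$ if $a\prec b$ and there is no $c$ with $a\prec c\prec b$. An $\mathcal S$-tree is a quadruple $(T,\preceq,\Sigma,\mathcal S)$ where $(T,\preceq)$ is a countable tree in which every node has finitely many immediate successors and $T(0)$ is finite, $\Sigma$ is a set, and $\mathcal S\colon T\times T^{<\omega}\times\Sigma\to T$ is a partial function such that: (S1) if $\mathcal S(a,\bar p,c)$ is defined then it is an immediate successor of $a$ and every entry of $\bar p$ has level at most $\ell(a)-1$; (S2) if $\mathcal S(a,\bar p,c)=\mathcal S(b,\bar q,d)$ then $a=b$, $\bar p=\bar q$ and $c=d$; (S3) for every $a\in T$ and every immediate successor $b$ of $a$ there are $\bar p\in T^{<\omega}$ and $c\in\Sigma$ with $b=\mathcal S(a,\bar p,c)$. For $S\subseteq T$, a map $f\colon S\to T$ is level-preserving if $\ell(a)=\ell(b)$ implies $\ell(f(a))=\ell(f(b))$;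 then $\tilde f(n)$ denotes $\ell(f(a))$ for any $a\in S$ with $\ell(a)=n$. An injection $F\colon T\to T$ is shape-preserving if (i) it is level-preserving; (ii) whenever $\mathcal S(a,\bar p,c)$ is defined, $\mathcal S(F(a),F(\bar p),c)$ is defined and $\mathcal S(F(a),F(\bar p),c)\preceq F(\mathcal S(a,\bar p,c))$, where $F(\bar p)$ is the tuple of images of the entries of $\bar p$; (iii) for every $a\in T(0)$ and $b\in T$ with $a\preceq b$ we have $a\preceq F(b)$. A shape-preserving $F$ skips level $m$ if $m\notin\tilde F[\omega]$, and skips only level $m$ if $\tilde F[\omega]=\omega\setminus\{m\}$. An $(\mathcal S,\mathcal M)$-tree is a quintuple $(T,\preceq,\Sigma,\mathcal S,\mathcal M)$ where $(T,\preceq,\Sigma,\mathcal S)$ is an $\mathcal S$-tree and $\mathcal M$ is a set of shape-preserving functions $T\to T$ such that: (M1) $\mathrm{Id}_T\in\mathcal M$, $\mathcal M$ is closed under composition, and whenever $(F_i)_{i\in\omega}$ is a sequence in $\mathcal M$ with $F_i\restriction T(\le i)=F_{i+1}\restriction T(\le i)$ for all $i$, there is $F_\infty\in\mathcal M$ with $F_\infty\restriction T(\le i)=F_i\restriction T(\le i)$ for all $i$; (M2) for every $n\in\omega$ and every $F\in\mathcal M$ with $\tilde F(n)>0$ which skips level $\tilde F(n)-1$, there are $F_1,F_2\in\mathcal M$ such that $F_2$ skips only level $\tilde F(n)-1$ and $(F_2\circ F_1)\restriction T(\le n)=F\restriction T(\le n)$; (M3) for all $n<m$ in $\omega$ there is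 $F^n_m\in\mathcal M$ skipping only level $m$ such that $F^n_m(b)=\mathcal S(b,\bar p,c)$ whenever $a\in T(n)$, $b\in T(m)$, $\bar p\in T^{<\omega}$, $c\in\Sigma$, $\mathcal S(a,\bar p,c)$ is defined and $\mathcal S(a,\bar p,c)\preceq b$. Notation: $\mathcal{AM}=\{F\restriction T(<k): F\in\mathcal M,\ k>0\}$. *)

theory Defs
  imports Main "HOL-Library.FuncSet" "HOL-Library.Countable_Set"
begin

definition strict :: "('a \<Rightarrow> 'a \<Rightarrow> bool) \<Rightarrow> 'a \<Rightarrow> 'a \<Rightarrow> bool" where
  "strict le b a \<longleftrightarrow> le b a \<and> b \<noteq> a"

definition is_tree :: "'a set \<Rightarrow> ('a \<Rightarrow> 'a \<Rightarrow> bool) \<Rightarrow> bool" where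
  "is_tree T le \<longleftrightarrow>
     (\<forall>a\<in>T. le a a) \<and>
     (\<forall>a\<in>T. \<forall>b\<in>T. le a b \<and> le b a \<longrightarrow> a = b) \<and>
     (\<forall>a\<in>T. \<forall>b\<in>T. \<forall>c\<in>T. le a b \<and> le b c \<longrightarrow> le a c) \<and>
     (\<forall>a\<in>T. finite {b\<in>T. strict le b a} \<and>
        (\<forall>b\<in>T. \<forall>c\<in>T. strict le b a \<and> strict le c a \<longrightarrow> le b c \<or> le c b))"

definition level :: "'a set \<Rightarrow> ('a \<Rightarrow> 'a \<Rightarrow> bool) \<Rightarrow> 'a \<Rightarrow> nat" where
  "level T le a = card {b\<in>T. strict le b a}"

definition lev :: "'a set \<Rightarrow> ('a \<Rightarrow> 'a \<Rightarrow> bool) \<Rightarrow> nat \<Rightarrow> 'a set" where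
  "lev T le n = {a\<in>T. level T le a = n}"

definition lev_le :: "'a set \<Rightarrow> ('a \<Rightarrow> 'a \<Rightarrow> bool) \<Rightarrow> nat \<Rightarrow> 'a set" where
  "lev_le T le n = {a\<in>T. level T le a \<le> n}"

definition lev_lt :: "'a set \<Rightarrow> ('a \<Rightarrow> 'a \<Rightarrow> bool) \<Rightarrow> nat \<Rightarrow> 'a set" where
  "lev_lt T le n = {a\<in>T. level T le a < n}"

definition imm_succ :: "'a set \<Rightarrow> ('a \<Rightarrow> 'a \<Rightarrow> bool) \<Rightarrow> 'a \<Rightarrow> 'a \<Rightarrow> bool" where
  "imm_succ T le a b \<longleftrightarrow> a \<in> T \<and> b \<in> T \<and> strict le a b \<and>
     \<not> (\<exists>c\<in>T. strict le a c \<and> strict le c b)"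

(* The partial function S : T \<times> T^{<\<omega>} \<times> \<Sigma> \<rightharpoonup> T is 'a \<Rightarrow> 'a list \<Rightarrow> 'c \<Rightarrow> 'a option,
   defined only on arguments from T, lists over T and \<Sigma>. *)
definition S_tree :: "'a set \<Rightarrow> ('a \<Rightarrow> 'a \<Rightarrow> bool) \<Rightarrow> 'c set \<Rightarrow> ('a \<Rightarrow> 'a list \<Rightarrow> 'c \<Rightarrow> 'a option) \<Rightarrow> bool" where
  "S_tree T le Sig S \<longleftrightarrow>
     is_tree T le \<and> countable T \<and>
     (\<forall>a\<in>T. finite {b. imm_succ T le a b}) \<and>
     finite (lev T le 0) \<and>
     (\<forall>a p c b. S a p c = Some b \<longrightarrow> a \<in> T \<and> set p \<subseteq> T \<and> c \<in> Sig) \<and>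
     \<comment> \<open>(S1)\<close>
     (\<forall>a p c b. S a p c = Some b \<longrightarrow> imm_succ T le a b \<and>
        (\<forall>x\<in>set p. int (level T le x) \<le> int (level T le a) - 1)) \<and>
     \<comment> \<open>(S2)\<close>
     (\<forall>a p c b a' q d. S a p c = Some b \<and> S a' q d = Some b \<longrightarrow> a = a' \<and> p = q \<and> c = d) \<and>
     \<comment> \<open>(S3)\<close>
     (\<forall>a\<in>T. \<forall>b. imm_succ T le a b \<longrightarrow> (\<exists>p c. S a p c = Some b))"

definition level_preserving :: "'a set \<Rightarrow> ('a \<Rightarrow> 'a \<Rightarrow> bool) \<Rightarrow> 'a set \<Rightarrow> ('a \<Rightarrow> 'a) \<Rightarrow> bool" where
  "level_preserving T le A f \<longleftrightarrow>
     (\<forall>a\<in>A. \<forall>b\<in>A. level T le a = level T le b \<longrightarrow> level T le (f a) = level T le (f b))"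

(* \<tilde>f(n): the level of f(a) for any a of level n *)
definition ftilde :: "'a set \<Rightarrow> ('a \<Rightarrow> 'a \<Rightarrow> bool) \<Rightarrow> ('a \<Rightarrow> 'a) \<Rightarrow> nat \<Rightarrow> nat" where
  "ftilde T le f n = level T le (f (SOME a. a \<in> T \<and> level T le a = n))"

definition ftilde_range :: "'a set \<Rightarrow> ('a \<Rightarrow> 'a \<Rightarrow> bool) \<Rightarrow> ('a \<Rightarrow> 'a) \<Rightarrow> nat set" where
  "ftilde_range T le F = (\<lambda>a. level T le (F a)) ` T"

definition shape_preserving :: "'a set \<Rightarrow> ('a \<Rightarrow> 'a \<Rightarrow> bool) \<Rightarrow> ('a \<Rightarrow> 'a list \<Rightarrow> 'c \<Rightarrow> 'a option) \<Rightarrow> ('a \<Rightarrow> 'a) \<Rightarrow> bool" where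
  "shape_preserving T le S F \<longleftrightarrow>
     F \<in> T \<rightarrow> T \<and> inj_on F T \<and>
     level_preserving T le T F \<and>
     (\<forall>a p c b. S a p c = Some b \<longrightarrow>
        (\<exists>b'. S (F a) (map F p) c = Some b' \<and> le b' (F b))) \<and>
     (\<forall>a\<in>lev T le 0. \<forall>b\<in>T. le a b \<longrightarrow> le a (F b))"

definition skips :: "'a set \<Rightarrow> ('a \<Rightarrow> 'a \<Rightarrow> bool) \<Rightarrow> ('a \<Rightarrow> 'a) \<Rightarrow> nat \<Rightarrow> bool" where
  "skips T le F m \<longleftrightarrow> m \<notin> ftilde_range T le F"

definition skips_only :: "'a set \<Rightarrow> ('a \<Rightarrow> 'a \<Rightarrow> bool) \<Rightarrow> ('a \<Rightarrow> 'a) \<Rightarrow> nat \<Rightarrow> bool" where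
  "skips_only T le F m \<longleftrightarrow> ftilde_range T le F = UNIV - {m}"

(* (S,M)-tree. Functions T \<rightarrow> T are represented extensionally (undefined outside T),
   so composition is compose T and the identity is restrict id T. *)
definition SM_tree :: "'a set \<Rightarrow> ('a \<Rightarrow> 'a \<Rightarrow> bool) \<Rightarrow> 'c set \<Rightarrow> ('a \<Rightarrow> 'a list \<Rightarrow> 'c \<Rightarrow> 'a option)
    \<Rightarrow> ('a \<Rightarrow> 'a) set \<Rightarrow> bool" where
  "SM_tree T le Sig S M \<longleftrightarrow>
     S_tree T le Sig S \<and>
     M \<subseteq> extensional T \<and>
     (\<forall>F\<in>M. shape_preserving T le S F) \<and>
     \<comment> \<open>(M1)\<close>
     restrict id T \<in> M \<and>
     (\<forall>F\<in>M. \<forall>G\<in>M. compose T F G \<in> M) \<and>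
     (\<forall>Fs. (\<forall>i. Fs i \<in> M) \<and>
           (\<forall>i. \<forall>a\<in>lev_le T le i. Fs i a = Fs (Suc i) a) \<longrightarrow>
           (\<exists>Finf\<in>M. \<forall>i. \<forall>a\<in>lev_le T le i. Finf a = Fs i a)) \<and>
     \<comment> \<open>(M2)\<close>
     (\<forall>n. \<forall>F\<in>M. ftilde T le F n > 0 \<and> skips T le F (ftilde T le F n - 1) \<longrightarrow>
        (\<exists>F1\<in>M. \<exists>F2\<in>M. skips_only T le F2 (ftilde T le F n - 1) \<and>
           (\<forall>a\<in>lev_le T le n. F2 (F1 a) = F a))) \<and>
     \<comment> \<open>(M3)\<close>
     (\<forall>n m. n < m \<longrightarrow>
        (\<exists>F\<in>M. skips_only T le F m \<and>
           (\<forall>a\<in>lev T le n. \<forall>b\<in>lev T le m. \<forall>p c b'.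
              S a p c = Some b' \<and> le b' b \<longrightarrow> S b p c = Some (F b))))"

(* \<A>\<M> = {F \<restriction> T(<k) : F \<in> M, k > 0}; an element is recorded together with its domain *)
definition AM :: "'a set \<Rightarrow> ('a \<Rightarrow> 'a \<Rightarrow> bool) \<Rightarrow> ('a \<Rightarrow> 'a) set \<Rightarrow> (('a \<Rightarrow> 'a) \<times> 'a set) set" where
  "AM T le M = {(restrict F (lev_lt T le k), lev_lt T le k) | F k. F \<in> M \<and> k > 0}"

end

theory Submission
  imports Defs
begin

text \<open>
  Write \<open>~G(k)\<close> for the level of the \<open>G\<close>-images of level-\<open>k\<close> nodes. If \<open>G \<in> M\<close> has a gap
  between \<open>~G(k)\<close> and \<open>~G(k+1)\<close>, then (M2) factors \<open>G\<close> on \<open>T(\<le>k+1)\<close> as \<open>F2 \<circ> F1\<close>, where \<open>F2\<close>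
  skips only the level \<open>L = ~G(k+1) - 1\<close>. Being rigid below \<open>L\<close>, \<open>F2\<close> is the identity there,
  so \<open>F1\<close> agrees with \<open>G\<close> on \<open>T(\<le>k)\<close> and \<open>~F1(k+1) = L\<close>: the gap shrinks by one. Closing
  the gaps at \<open>k = n, n+1, \<dots>\<close> in turn gives a coherent sequence in \<open>M\<close> whose limit (M1) skips
  no level from \<open>~f(n)\<close> on.

  Rigidity, which also gives uniqueness: by (S3) a node of level \<open>k+1\<close> is \<open>S(a,p,c)\<close> with \<open>a\<close>
  and \<open>p\<close> of level at most \<open>k\<close>, and a map of \<open>M\<close> that skips no level between \<open>k\<close> and \<open>k+1\<close>
  sends it to the node \<open>S(F a, F p, c)\<close>. Hence such maps are determined by their restriction
  to \<open>T(\<le>n)\<close>.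
\<close>

lemma strict_mono_skip_only_fixes_below:
  fixes h :: "nat \<Rightarrow> nat"
  assumes mono: "strict_mono h" and range: "range h = UNIV - {L}"
  shows "j < L \<Longrightarrow> h j = j"
proof (induction j rule: less_induct)
  case (less j)
  obtain x where x: "h x = j" using range less.prems by (metis Diff_iff UNIV_I imageE less_irrefl singletonD)
  have "x \<le> j" using strict_mono_imp_increasing[OF mono, of x] x by simp
  moreover have "\<not> x < j" using less.IH[of x] less.prems x by auto
  ultimately show ?case using x by simp
qed

lemma strict_mono_skip_only_Suc:
  fixes h :: "nat \<Rightarrow> nat"
  assumes mono: "strict_mono h" and range: "range h = UNIV - {L}" and hx: "h x = Suc L"
  shows "x = L"
proof -
  have "h L \<noteq> L" using range by auto
  then have hL: "Suc L \<le> h L" using strict_mono_imp_increasing[OF mono, of L] by simp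
  have "x \<le> Suc L" using strict_mono_imp_increasing[OF mono, of x] hx by simp
  moreover have "x \<noteq> Suc L" using mono hL hx by (metis lessI not_less strict_mono_less)
  moreover have "\<not> x < L" using strict_mono_skip_only_fixes_below[OF mono range] hx by force
  ultimately show ?thesis by simp
qed

lemma strict_mono_onto_from_iff:
  fixes h :: "nat \<Rightarrow> nat"
  assumes mono: "strict_mono h"
  shows "{h n..} \<subseteq> range h \<longleftrightarrow> (\<forall>i. h (n + i) = h n + i)"
proof
  assume onto: "{h n..} \<subseteq> range h"
  show "\<forall>i. h (n + i) = h n + i"
  proof
    fix i show "h (n + i) = h n + i"
    proof (induction i)
      case (Suc i)
      obtain j where j: "h j = h n + Suc i" using onto by (metis atLeast_iff imageE le_add1 subsetD)
      have "n + i < j" using j Suc.IH mono by (metis add_Suc_right lessI not_less_eq strict_mono_less)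
      then have "h (n + Suc i) \<le> h j" using mono by (simp add: strict_mono_less_eq)
      moreover have "h (n + i) < h (n + Suc i)" using mono by (simp add: strict_mono_def)
      ultimately show ?case using Suc.IH j by simp
    qed simp
  qed
next
  assume "\<forall>i. h (n + i) = h n + i"
  then show "{h n..} \<subseteq> range h" by (metis atLeast_iff le_add_diff_inverse rangeI subsetI)
qed

locale tree =
  fixes T :: "'a set" and le :: "'a \<Rightarrow> 'a \<Rightarrow> bool"
  assumes is_tree: "is_tree T le"
begin

lemma refl: "a \<in> T \<Longrightarrow> le a a"
  and antisym: "a \<in> T \<Longrightarrow> b \<in> T \<Longrightarrow> le a b \<Longrightarrow> le b a \<Longrightarrow> a = b"
  and trans: "a \<in> T \<Longrightarrow> b \<in> T \<Longrightarrow> c \<in> T \<Longrightarrow> le a b \<Longrightarrow> le b c \<Longrightarrow> le a c"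
  and finite_below: "a \<in> T \<Longrightarrow> finite {b\<in>T. strict le b a}"
  and below_linear: "a \<in> T \<Longrightarrow> b \<in> T \<Longrightarrow> c \<in> T \<Longrightarrow> strict le b a \<Longrightarrow> strict le c a \<Longrightarrow>
     le b c \<or> le c b"
  using is_tree unfolding is_tree_def by blast+

lemma strict_trans:
  assumes "x \<in> T" "a \<in> T" "c \<in> T" "le x a" "strict le a c"
  shows "strict le x c"
  using assms trans[of x a c] antisym[of a c] unfolding strict_def by blast

lemma strict_imp_level_less:
  assumes "a \<in> T" "c \<in> T" "strict le a c"
  shows "level T le a < level T le c"
proof -
  have "{x\<in>T. strict le x a} \<subset> {x\<in>T. strict le x c}"
    using assms strict_trans[of _ a c] unfolding strict_def by blast
  then show ?thesis unfolding level_def using psubset_card_mono[OF finite_below[OF assms(2)]] by blast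
qed

lemma le_imp_level_le: "a \<in> T \<Longrightarrow> c \<in> T \<Longrightarrow> le a c \<Longrightarrow> level T le a \<le> level T le c"
  and le_level_eq_imp_eq: "a \<in> T \<Longrightarrow> c \<in> T \<Longrightarrow> le a c \<Longrightarrow> level T le a = level T le c \<Longrightarrow> a = c"
  using strict_imp_level_less[of a c] unfolding strict_def by force+

lemma imm_succ_level:
  assumes "imm_succ T le a b"
  shows "level T le b = Suc (level T le a)"
proof -
  have a: "a \<in> T" "b \<in> T" "strict le a b" "\<not> (\<exists>c\<in>T. strict le a c \<and> strict le c b)"
    using assms unfolding imm_succ_def by auto
  have "{x\<in>T. strict le x b} = insert a {x\<in>T. strict le x a}"
  proof (intro equalityI subsetI)
    fix x assume "x \<in> {x\<in>T. strict le x b}"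
    then show "x \<in> insert a {x\<in>T. strict le x a}"
      using below_linear[OF a(2) _ a(1) _ a(3), of x] a(4) unfolding strict_def by auto
  next
    fix x assume "x \<in> insert a {x\<in>T. strict le x a}"
    then show "x \<in> {x\<in>T. strict le x b}"
      using a(1-3) strict_trans[OF _ a(1,2), of x] unfolding strict_def by auto
  qed
  moreover have "a \<notin> {x\<in>T. strict le x a}" unfolding strict_def by auto
  ultimately show ?thesis unfolding level_def using finite_below[OF a(1)] by simp
qed

lemma exists_imm_pred:
  assumes b: "b \<in> T" "level T le b = Suc j"
  shows "\<exists>a. imm_succ T le a b \<and> level T le a = j"
proof -
  define P where "P = {x\<in>T. strict le x b}"
  have fin: "finite P" unfolding P_def using finite_below[OF b(1)] .
  have "P \<noteq> {}" using b(2) unfolding P_def level_def by (metis card.empty nat.distinct(1))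
  then obtain a where aP: "a \<in> P" and "level T le a = Max (level T le ` P)"
    using Max_in[of "level T le ` P"] fin by (metis (no_types, lifting) image_iff image_is_empty finite_imageI)
  then have max: "\<And>x. x \<in> P \<Longrightarrow> level T le x \<le> level T le a" using fin by simp
  have "imm_succ T le a b"
    unfolding imm_succ_def
  proof (intro conjI notI)
    show "a \<in> T" "b \<in> T" "strict le a b" using aP b(1) unfolding P_def by auto
    assume "\<exists>c\<in>T. strict le a c \<and> strict le c b"
    then obtain c where "c \<in> T" "strict le a c" "c \<in> P" unfolding P_def by blast
    then show False using max[of c] strict_imp_level_less[of a c] aP unfolding P_def by force
  qed
  then show ?thesis using imm_succ_level b(2) by fastforce
qed

end

locale sm_tree =
  fixes T :: "'a set" and le :: "'a \<Rightarrow> 'a \<Rightarrow> bool" and Sig :: "'c set"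
    and S :: "'a \<Rightarrow> 'a list \<Rightarrow> 'c \<Rightarrow> 'a option" and M :: "('a \<Rightarrow> 'a) set"
  assumes SM_tree: "SM_tree T le Sig S M"

sublocale sm_tree \<subseteq> tree T le
  using SM_tree unfolding SM_tree_def S_tree_def by unfold_locales blast

context sm_tree
begin

lemma S_tree: "S_tree T le Sig S"
  using SM_tree unfolding SM_tree_def by blast

lemma S_args_in_T: "S a p c = Some b \<Longrightarrow> a \<in> T \<and> set p \<subseteq> T"
  using S_tree unfolding S_tree_def by blast

lemma S_imm_succ: "S a p c = Some b \<Longrightarrow> imm_succ T le a b"
  using S_tree unfolding S_tree_def by blast

lemma S_onto_imm_succ: "a \<in> T \<Longrightarrow> imm_succ T le a b \<Longrightarrow> \<exists>p c. S a p c = Some b"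
  using S_tree unfolding S_tree_def by blast

lemma S_args_level: "S a p c = Some b \<Longrightarrow> x \<in> set p \<Longrightarrow> level T le x < level T le a"
  using S_tree unfolding S_tree_def by fastforce

lemma M_extensional: "M \<subseteq> extensional T"
  and id_in_M: "restrict id T \<in> M"
  and M_shape_preserving: "F \<in> M \<Longrightarrow> shape_preserving T le S F"
  and M_limit: "(\<forall>i. Fs i \<in> M) \<Longrightarrow> (\<forall>i. \<forall>a\<in>lev_le T le i. Fs i a = Fs (Suc i) a) \<Longrightarrow>
     \<exists>F\<in>M. \<forall>i. \<forall>a\<in>lev_le T le i. F a = Fs i a"
  and M_factor: "F \<in> M \<Longrightarrow> ftilde T le F n > 0 \<Longrightarrow> skips T le F (ftilde T le F n - 1) \<Longrightarrow>
     \<exists>F1\<in>M. \<exists>F2\<in>M. skips_only T le F2 (ftilde T le F n - 1) \<and>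
       (\<forall>a\<in>lev_le T le n. F2 (F1 a) = F a)"
  using SM_tree unfolding SM_tree_def by simp_all

lemma M_skip_only:
  assumes "0 < m"
  shows "\<exists>F\<in>M. skips_only T le F m"
proof -
  have "\<forall>n m. n < m \<longrightarrow> (\<exists>F\<in>M. skips_only T le F m \<and>
           (\<forall>a\<in>lev T le n. \<forall>b\<in>lev T le m. \<forall>p c b'.
              S a p c = Some b' \<and> le b' b \<longrightarrow> S b p c = Some (F b)))"
    using SM_tree unfolding SM_tree_def by simp
  then show ?thesis using assms by blast
qed

lemma M_maps_into: "F \<in> M \<Longrightarrow> a \<in> T \<Longrightarrow> F a \<in> T"
  and M_level_preserving: "F \<in> M \<Longrightarrow> a \<in> T \<Longrightarrow> b \<in> T \<Longrightarrow> level T le a = level T le b \<Longrightarrow>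
     level T le (F a) = level T le (F b)"
  and M_shape: "F \<in> M \<Longrightarrow> S a p c = Some b \<Longrightarrow> \<exists>b'. S (F a) (map F p) c = Some b' \<and> le b' (F b)"
  and M_root: "F \<in> M \<Longrightarrow> a \<in> lev T le 0 \<Longrightarrow> b \<in> T \<Longrightarrow> le a b \<Longrightarrow> le a (F b)"
  using M_shape_preserving unfolding shape_preserving_def level_preserving_def by blast+

lemma level_nonempty: "\<exists>a\<in>T. level T le a = m"
proof -
  obtain F where F: "F \<in> M" "skips_only T le F (Suc m)" using M_skip_only[of "Suc m"] by blast
  then have "m \<in> ftilde_range T le F" unfolding skips_only_def by auto
  then obtain a where "a \<in> T" "level T le (F a) = m" unfolding ftilde_range_def by auto
  then show ?thesis using M_maps_into[OF F(1)] by blast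
qed

definition level_rep :: "nat \<Rightarrow> 'a" where
  "level_rep j = (SOME a. a \<in> T \<and> level T le a = j)"

lemma level_rep: "level_rep j \<in> T" "level T le (level_rep j) = j"
  using someI_ex[OF level_nonempty[of j, unfolded Bex_def]] unfolding level_rep_def by auto

lemma ftilde_level_rep: "ftilde T le F j = level T le (F (level_rep j))"
  unfolding ftilde_def level_rep_def ..

lemma ftilde_level: "F \<in> M \<Longrightarrow> a \<in> T \<Longrightarrow> ftilde T le F (level T le a) = level T le (F a)"
  unfolding ftilde_level_rep by (rule M_level_preserving[OF _ level_rep(1) _ level_rep(2)])

lemma ftilde_cong:
  "\<forall>a\<in>lev_le T le m. F a = G a \<Longrightarrow> j \<le> m \<Longrightarrow> ftilde T le F j = ftilde T le G j"
  unfolding ftilde_level_rep using level_rep unfolding lev_le_def by auto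

lemma ftilde_Suc_gt:
  assumes F: "F \<in> M"
  shows "ftilde T le F j < ftilde T le F (Suc j)"
proof -
  obtain a where a: "imm_succ T le a (level_rep (Suc j))" "level T le a = j"
    using exists_imm_pred[OF level_rep] by blast
  then have aT: "a \<in> T" unfolding imm_succ_def by blast
  obtain p c where "S a p c = Some (level_rep (Suc j))" using S_onto_imm_succ[OF aT a(1)] by blast
  then obtain b' where b': "S (F a) (map F p) c = Some b'" "le b' (F (level_rep (Suc j)))"
    using M_shape[OF F] by blast
  have "imm_succ T le (F a) b'" using S_imm_succ[OF b'(1)] .
  then have "level T le b' = Suc (level T le (F a))" "b' \<in> T"
    using imm_succ_level unfolding imm_succ_def by auto
  then show ?thesis
    using le_imp_level_le[OF _ M_maps_into[OF F level_rep(1)] b'(2)] ftilde_level[OF F aT] a(2)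
    unfolding ftilde_level_rep by simp
qed

lemma ftilde_strict_mono: "F \<in> M \<Longrightarrow> strict_mono (ftilde T le F)"
  using ftilde_Suc_gt strict_mono_Suc_iff by blast

lemma ftilde_range_eq_range:
  assumes F: "F \<in> M"
  shows "ftilde_range T le F = range (ftilde T le F)"
proof
  show "ftilde_range T le F \<subseteq> range (ftilde T le F)"
    unfolding ftilde_range_def using ftilde_level[OF F] by (metis image_subsetI rangeI)
  show "range (ftilde T le F) \<subseteq> ftilde_range T le F"
    unfolding ftilde_range_def ftilde_level_rep using level_rep(1) by auto
qed

lemma skips_no_level_from_iff:
  assumes F: "F \<in> M"
  shows "(\<forall>l\<ge>ftilde T le F n. l \<in> ftilde_range T le F) \<longleftrightarrow>
     (\<forall>i. ftilde T le F (n + i) = ftilde T le F n + i)"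
proof -
  have "(\<forall>l\<ge>ftilde T le F n. l \<in> ftilde_range T le F) \<longleftrightarrow> {ftilde T le F n..} \<subseteq> range (ftilde T le F)"
    unfolding ftilde_range_eq_range[OF F] by auto
  then show ?thesis using strict_mono_onto_from_iff[OF ftilde_strict_mono[OF F]] by simp
qed

lemma eq_on_levels_extend:
  assumes F: "F \<in> M" and G: "G \<in> M" and agree: "\<forall>a\<in>lev_le T le n. F a = G a"
    and F_no_skip: "\<forall>i\<le>k. ftilde T le F (n + i) = ftilde T le F n + i"
    and G_no_skip: "\<forall>i\<le>k. ftilde T le G (n + i) = ftilde T le G n + i"
  shows "\<forall>a\<in>lev_le T le (n + k). F a = G a"
  using F_no_skip G_no_skip
proof (induction k)
  case (Suc k)
  then have IH: "\<forall>a\<in>lev_le T le (n + k). F a = G a" by simp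
  have "ftilde T le G n = ftilde T le F n" using ftilde_cong[OF agree] by simp
  then have levels: "\<forall>i\<le>Suc k. ftilde T le H (n + i) = ftilde T le F n + i" if "H \<in> {F, G}" for H
    using Suc.prems that by auto
  show ?case
  proof
    fix b assume "b \<in> lev_le T le (n + Suc k)"
    then have bT: "b \<in> T" and "level T le b \<le> Suc (n + k)" unfolding lev_le_def by auto
    moreover have "level T le b = Suc (n + k) \<Longrightarrow> F b = G b"
    proof -
      assume lb: "level T le b = Suc (n + k)"
      obtain a where a: "imm_succ T le a b" "level T le a = n + k" using exists_imm_pred[OF bT lb] by blast
      then have aT: "a \<in> T" unfolding imm_succ_def by blast
      obtain p c where pc: "S a p c = Some b" using S_onto_imm_succ[OF aT a(1)] by blast
      have "\<forall>x\<in>set p. x \<in> lev_le T le (n + k)"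
        using S_args_in_T[OF pc] S_args_level[OF pc] a(2) unfolding lev_le_def by fastforce
      then have same_args: "F a = G a" "map F p = map G p"
        using IH aT a(2) unfolding lev_le_def by auto
      have image_is_succ: "S (H a) (map H p) c = Some (H b)" if H: "H \<in> {F, G}" for H
      proof -
        have HM: "H \<in> M" using H F G by blast
        obtain b' where b': "S (H a) (map H p) c = Some b'" "le b' (H b)" using M_shape[OF HM pc] by blast
        have "imm_succ T le (H a) b'" using S_imm_succ[OF b'(1)] .
        then have "b' \<in> T" "level T le b' = Suc (level T le (H a))"
          using imm_succ_level unfolding imm_succ_def by auto
        moreover have "level T le (H a) = ftilde T le F n + k" "level T le (H b) = ftilde T le F n + Suc k"
          using ftilde_level[OF HM aT] ftilde_level[OF HM bT] a(2) lb levels[OF H, rule_format, of k]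
            levels[OF H, rule_format, of "Suc k"] by simp_all
        ultimately show ?thesis
          using le_level_eq_imp_eq[OF _ M_maps_into[OF HM bT] b'(2)] b'(1) by simp
      qed
      show "F b = G b" using image_is_succ[of F] image_is_succ[of G] same_args by simp
    qed
    ultimately show "F b = G b" using IH unfolding lev_le_def by fastforce
  qed
qed (use agree in simp)

lemma fixes_levels_up_to:
  assumes F: "F \<in> M" and fixed: "\<forall>j\<le>K. ftilde T le F j = j"
  shows "\<forall>a\<in>lev_le T le K. F a = a"
proof -
  define I where "I = restrict id T"
  have I: "I \<in> M" unfolding I_def by (rule id_in_M)
  have "ftilde T le I j = j" for j unfolding ftilde_level_rep I_def using level_rep by simp
  moreover have "\<forall>a\<in>lev_le T le 0. F a = I a"
  proof
    fix a assume "a \<in> lev_le T le 0"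
    then have aT: "a \<in> T" and a0: "level T le a = 0" unfolding lev_le_def by auto
    have "le a (F a)" using M_root[OF F _ aT refl[OF aT]] aT a0 unfolding lev_def by simp
    moreover have "level T le (F a) = 0" using ftilde_level[OF F aT] a0 fixed by simp
    ultimately show "F a = I a"
      using le_level_eq_imp_eq[OF aT M_maps_into[OF F aT]] a0 aT unfolding I_def by simp
  qed
  ultimately have "\<forall>a\<in>lev_le T le (0 + K). F a = I a"
    using eq_on_levels_extend[OF F I] fixed by simp
  then show ?thesis unfolding I_def lev_le_def by auto
qed

lemma factor_through_skip_only:
  assumes G: "G \<in> M" and F1: "F1 \<in> M" and F2: "F2 \<in> M" and skip_L: "skips_only T le F2 L"
    and factor: "\<forall>a\<in>lev_le T le (Suc k). F2 (F1 a) = G a"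
    and below: "ftilde T le G k < L" and above: "ftilde T le G (Suc k) = Suc L"
  shows "(\<forall>a\<in>lev_le T le k. F1 a = G a) \<and> ftilde T le F1 (Suc k) = L"
proof -
  have mono2: "strict_mono (ftilde T le F2)" using ftilde_strict_mono[OF F2] .
  have range2: "range (ftilde T le F2) = UNIV - {L}"
    using skip_L ftilde_range_eq_range[OF F2] unfolding skips_only_def by simp
  have "\<forall>j\<le>L - 1. ftilde T le F2 j = j"
    using strict_mono_skip_only_fixes_below[OF mono2 range2] below by simp
  then have F2_id: "\<forall>b\<in>lev_le T le (L - 1). F2 b = b" by (rule fixes_levels_up_to[OF F2])
  have "F1 a = G a" if "a \<in> lev_le T le k" for a
  proof -
    have aT: "a \<in> T" and la: "level T le a \<le> k" using that unfolding lev_le_def by auto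
    have F1aT: "F1 a \<in> T" using M_maps_into[OF F1 aT] .
    have G_via: "F2 (F1 a) = G a" using factor aT la unfolding lev_le_def by simp
    have "level T le (F1 a) \<le> ftilde T le F2 (level T le (F1 a))"
      by (rule strict_mono_imp_increasing[OF mono2])
    also have "\<dots> = level T le (G a)" using ftilde_level[OF F2 F1aT] G_via by simp
    also have "\<dots> = ftilde T le G (level T le a)" using ftilde_level[OF G aT] by simp
    also have "\<dots> < L"
      using la below ftilde_strict_mono[OF G] by (metis le_less_trans strict_mono_less_eq)
    finally have "F1 a \<in> lev_le T le (L - 1)" using F1aT unfolding lev_le_def by simp
    then show ?thesis using F2_id G_via by metis
  qed
  moreover
  let ?b = "F1 (level_rep (Suc k))"
  have "ftilde T le F2 (level T le ?b) = Suc L"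
    using ftilde_level[OF F2 M_maps_into[OF F1 level_rep(1)]] factor level_rep above
    unfolding lev_le_def ftilde_level_rep by simp
  then have "ftilde T le F1 (Suc k) = L"
    using strict_mono_skip_only_Suc[OF mono2 range2] unfolding ftilde_level_rep by blast
  ultimately show ?thesis by blast
qed

lemma narrow_gap:
  assumes G: "G \<in> M" and gap: "Suc (ftilde T le G k) < ftilde T le G (Suc k)"
  shows "\<exists>G'\<in>M. (\<forall>a\<in>lev_le T le k. G' a = G a) \<and> ftilde T le G' (Suc k) = ftilde T le G (Suc k) - 1"
proof -
  define L where "L = ftilde T le G (Suc k) - 1"
  have mono: "strict_mono (ftilde T le G)" using ftilde_strict_mono[OF G] .
  have "ftilde T le G j \<noteq> L" for j
  proof (cases "j \<le> k")
    case True
    then have "ftilde T le G j \<le> ftilde T le G k" using mono by (simp add: strict_mono_less_eq)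
    then show ?thesis using gap unfolding L_def by linarith
  next
    case False
    then have "ftilde T le G (Suc k) \<le> ftilde T le G j" using mono by (simp add: strict_mono_less_eq)
    then show ?thesis using gap unfolding L_def by linarith
  qed
  then have "skips T le G L" unfolding skips_def ftilde_range_eq_range[OF G] by auto
  then obtain F1 F2 where "F1 \<in> M" "F2 \<in> M" "skips_only T le F2 L"
    "\<forall>a\<in>lev_le T le (Suc k). F2 (F1 a) = G a"
    using M_factor[OF G, of "Suc k"] gap unfolding L_def by auto
  moreover have "ftilde T le G k < L" "ftilde T le G (Suc k) = Suc L" using gap unfolding L_def by auto
  ultimately show ?thesis using factor_through_skip_only[OF G] unfolding L_def by blast
qed

lemma close_gap:
  assumes G: "G \<in> M"
  shows "\<exists>G'\<in>M. (\<forall>a\<in>lev_le T le k. G' a = G a) \<and> ftilde T le G' (Suc k) = Suc (ftilde T le G' k)"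
  using G
proof (induction "ftilde T le G (Suc k) - Suc (ftilde T le G k)" arbitrary: G rule: less_induct)
  case less
  show ?case
  proof (cases "Suc (ftilde T le G k) < ftilde T le G (Suc k)")
    case True
    then obtain G' where G': "G' \<in> M" "\<forall>a\<in>lev_le T le k. G' a = G a"
      "ftilde T le G' (Suc k) = ftilde T le G (Suc k) - 1"
      using narrow_gap[OF less.prems] by blast
    moreover have "ftilde T le G' k = ftilde T le G k" using ftilde_cong[OF G'(2)] by simp
    ultimately obtain G'' where "G'' \<in> M" "\<forall>a\<in>lev_le T le k. G'' a = G' a"
      "ftilde T le G'' (Suc k) = Suc (ftilde T le G'' k)"
      using less.hyps[OF _ G'(1)] True by fastforce
    then show ?thesis using G'(2) unfolding lev_le_def by (intro bexI) auto
  next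
    case False
    then show ?thesis using less.prems ftilde_Suc_gt[OF less.prems, of k] by (intro bexI) auto
  qed
qed

lemma limit_of_coherent_sequence:
  assumes in_M: "\<And>j. H j \<in> M" and coherent: "\<And>j. \<forall>a\<in>lev_le T le (n + j). H (Suc j) a = H j a"
  shows "\<exists>F\<in>M. \<forall>j. \<forall>a\<in>lev_le T le (n + j). F a = H j a"
proof -
  have "\<forall>a\<in>lev_le T le i. H (i - n) a = H (Suc i - n) a" for i
  proof (cases "i < n")
    case False
    then have "Suc i - n = Suc (i - n)" "n + (i - n) = i" by auto
    then show ?thesis using coherent[of "i - n"] by simp
  qed simp
  then obtain F where "F \<in> M" "\<forall>i. \<forall>a\<in>lev_le T le i. F a = H (i - n) a"
    using M_limit[of "\<lambda>i. H (i - n)"] in_M by blast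
  then show ?thesis by (metis add_diff_cancel_left')
qed

lemma exists_extension_without_skips:
  assumes F: "F \<in> M"
  shows "\<exists>G\<in>M. (\<forall>a\<in>lev_le T le n. G a = F a) \<and> (\<forall>i. ftilde T le G (n + i) = ftilde T le G n + i)"
proof -
  define step where "step k G = (SOME G'. G' \<in> M \<and> (\<forall>a\<in>lev_le T le (n + k). G' a = G a) \<and>
      ftilde T le G' (Suc (n + k)) = Suc (ftilde T le G' (n + k)))" for k G
  have step: "step k G \<in> M \<and> (\<forall>a\<in>lev_le T le (n + k). step k G a = G a) \<and>
      ftilde T le (step k G) (Suc (n + k)) = Suc (ftilde T le (step k G) (n + k))" if "G \<in> M" for k G
    unfolding step_def using close_gap[OF that, of "n + k"] unfolding Bex_def by (rule someI_ex)
  define H where "H = rec_nat F step"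
  have H_in_M: "H j \<in> M" for j by (induction j) (simp_all add: H_def F step)
  have coherent: "\<forall>a\<in>lev_le T le (n + j). H (Suc j) a = H j a" for j
    using step[OF H_in_M] by (simp add: H_def)
  obtain G where G: "G \<in> M" and lim: "\<forall>j. \<forall>a\<in>lev_le T le (n + j). G a = H j a"
    using limit_of_coherent_sequence[OF H_in_M coherent] by blast
  have "ftilde T le G (Suc (n + j)) = Suc (ftilde T le G (n + j))" for j
  proof -
    have "\<forall>a\<in>lev_le T le (n + Suc j). G a = H (Suc j) a" using lim by blast
    then show ?thesis
      using step[OF H_in_M, of j] ftilde_cong[of "n + Suc j" G "H (Suc j)"] by (simp add: H_def)
  qed
  then have "ftilde T le G (n + i) = ftilde T le G n + i" for i by (induction i) simp_all
  moreover have "\<forall>a\<in>lev_le T le n. G a = F a" using spec[OF lim, of 0] by (simp add: H_def)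
  ultimately show ?thesis using G by blast
qed

lemma extension_without_skips_unique:
  assumes "F \<in> M" "G \<in> M" "\<forall>a\<in>lev_le T le n. F a = G a"
    and "\<forall>i. ftilde T le F (n + i) = ftilde T le F n + i"
    and "\<forall>i. ftilde T le G (n + i) = ftilde T le G n + i"
  shows "F = G"
proof (rule extensionalityI)
  show "F \<in> extensional T" "G \<in> extensional T" using assms(1,2) M_extensional by auto
  fix x assume "x \<in> T"
  moreover have "\<forall>a\<in>lev_le T le (n + level T le x). F a = G a"
    using eq_on_levels_extend assms by blast
  ultimately show "F x = G x" unfolding lev_le_def by auto
qed

end

theorem mainTheorem5:
  fixes T :: "'a set" and le :: "'a \<Rightarrow> 'a \<Rightarrow> bool" and Sig :: "'c set"
    and S :: "'a \<Rightarrow> 'a list \<Rightarrow> 'c \<Rightarrow> 'a option" and M :: "('a \<Rightarrow> 'a) set"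
    and n :: nat and f :: "'a \<Rightarrow> 'a"
  assumes "SM_tree T le Sig S M"
    and "(f, lev_le T le n) \<in> AM T le M"
  shows "\<exists>!g. g \<in> M \<and> (\<forall>a\<in>lev_le T le n. g a = f a) \<and>
               (\<forall>l\<ge>ftilde T le f n. l \<in> ftilde_range T le g)"
proof -
  interpret sm_tree T le Sig S M by (rule sm_tree.intro) (rule assms(1))
  obtain F k where F: "F \<in> M" and "f = restrict F (lev_lt T le k)" "lev_le T le n = lev_lt T le k"
    using assms(2) unfolding AM_def by blast
  then have f_eq_F: "\<forall>a\<in>lev_le T le n. F a = f a" by simp
  let ?extends_F = "\<lambda>g. g \<in> M \<and> (\<forall>a\<in>lev_le T le n. g a = F a) \<and>
      (\<forall>i. ftilde T le g (n + i) = ftilde T le g n + i)"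
  have same_conditions: "(\<forall>a\<in>lev_le T le n. g a = f a) \<and> (\<forall>l\<ge>ftilde T le f n. l \<in> ftilde_range T le g)
      \<longleftrightarrow> (\<forall>a\<in>lev_le T le n. g a = F a) \<and> (\<forall>i. ftilde T le g (n + i) = ftilde T le g n + i)"
    if "g \<in> M" for g
  proof -
    have "(\<forall>a\<in>lev_le T le n. g a = f a) \<Longrightarrow> ftilde T le f n = ftilde T le g n"
      using ftilde_cong[of n f g n] by simp
    then show ?thesis using skips_no_level_from_iff[OF that, of n] f_eq_F by auto
  qed
  obtain G where G: "?extends_F G" using exists_extension_without_skips[OF F] by blast
  show ?thesis
  proof (rule ex1I[of _ G])
    fix g assume "g \<in> M \<and> (\<forall>a\<in>lev_le T le n. g a = f a) \<and> (\<forall>l\<ge>ftilde T le f n. l \<in> ftilde_range T le g)"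
    then have "?extends_F g" using same_conditions by blast
    then show "g = G" using extension_without_skips_unique[of g G n] G by simp
  qed (use G same_conditions in blast)
qed

end
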